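(* Let $\alpha\in(\tfrac12,1)$, $x'\in\mathbb{R}^d$, and let $f:\mathbb{R}^d\to\mathbb{R}$ be differentiable with $\nabla f$ $\alpha$-Hölder continuous. Then $$\sup_{r>0}\frac{1}{r^{2\alpha}}\inf_{B,b}\big\|\nabla f-B_{x'}\big\|_{B_r(x')}\le C\sup_{l>0}\frac{1}{l^{2\alpha}}\sup_{|y|\le l}\inf_{k\in\mathbb{R}^d}\big\|\nabla\delta_yf-k\big\|_{B_l(x')},$$ where the infimum on the left is over symmetric $B\in\mathbb{R}^{d\times d}$ and $b\in\mathbb{R}^d$, $B_{x'}(x):=B(x-x')+b$, and $C$ depends only on $d$ and $\alpha$.
   Context: $\delta_yf(x):=f(x+y)-f(x)$ (applied entrywise to vector fields). $\|\cdot\|_{B_r(x')}$ denotes the supremum norm over the ball $B_r(x')$ (for vector-valued functions, of the Euclidean norm). *)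

theory Defs
  imports "HOL-Analysis.Analysis"
begin

definition delta :: "'a::ab_group_add \<Rightarrow> ('a \<Rightarrow> 'b::ab_group_add) \<Rightarrow> 'a \<Rightarrow> 'b" where
  "delta y f x = f (x + y) - f x"

definition supnorm_ball :: "('a::metric_space \<Rightarrow> 'b::real_normed_vector) \<Rightarrow> 'a \<Rightarrow> real \<Rightarrow> ennreal" where
  "supnorm_ball h x0 r = (SUP z\<in>ball x0 r. ennreal (norm (h z)))"

definition holder_continuous :: "real \<Rightarrow> ('a::real_normed_vector \<Rightarrow> 'b::real_normed_vector) \<Rightarrow> bool" where
  "holder_continuous \<alpha> g \<longleftrightarrow> (\<exists>M. \<forall>x y. norm (g x - g y) \<le> M * norm (x - y) powr \<alpha>)"

end

theory Submission
  imports Defs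
begin

text \<open>Put \<open>h w = \<nabla>f (x' + w) - \<nabla>f x'\<close> and let \<open>K\<close> be the right-hand supremum. With
  \<open>l = |a| + |y|\<close>, the oscillation bound on \<open>\<delta>\<^sub>y\<nabla>f\<close> over \<open>B\<^sub>l(x')\<close> says that \<open>h\<close> is approximately additive,
  \<open>|h (a + y) - h a - h y| \<le> 2K (|a| + |y|)\<^bsup>2\<alpha>\<^esup>\<close>. Since \<open>2\<alpha> > 1\<close>, the Hyers--Ulam--Rassias
  iteration \<open>2\<^sup>n h (2\<^sup>-\<^sup>n w)\<close> converges geometrically to an additive map \<open>L\<close> with
  \<open>|h w - L w| \<le> 2K/(1 - 2\<^bsup>1-2\<alpha>\<^esup>) |w|\<^bsup>2\<alpha>\<^esup>\<close>, and continuity of \<open>h\<close> at \<open>0\<close> makes \<open>L\<close> linear.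
  Since \<open>L\<close> approximates the gradient to order higher than one, the mean value theorem shows that the
  second differences of \<open>f\<close> are \<open>L z \<bullet> y\<close> to that order, so \<open>L\<close> is symmetric; \<open>B = L\<close>,
  \<open>b = \<nabla>f x'\<close> then bound the left-hand side.\<close>

lemma additive_continuous_imp_scaleR:
  fixes \<psi> :: "real \<Rightarrow> 'b::real_normed_vector"
  assumes add: "\<And>s t. \<psi> (s + t) = \<psi> s + \<psi> t"
    and cont: "continuous_on UNIV \<psi>"
  shows "\<psi> t = t *\<^sub>R \<psi> 1"
proof -
  define \<phi> where "\<phi> t = \<psi> t - t *\<^sub>R \<psi> 1" for t
  have add_\<phi>: "\<phi> (s + t) = \<phi> s + \<phi> t" for s t
    by (simp add: \<phi>_def add scaleR_add_left)
  have "\<phi> 0 = 0" using add_\<phi>[of 0 0] by simp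
  then have neg_\<phi>: "\<phi> (- t) = - \<phi> t" for t
    using add_\<phi>[of t "- t"] by (metis add.right_inverse eq_neg_iff_add_eq_0)
  have nat_\<phi>: "\<phi> (of_nat n * t) = of_nat n *\<^sub>R \<phi> t" for n t
    by (induction n) (auto simp: \<open>\<phi> 0 = 0\<close> add_\<phi> distrib_right scaleR_add_left)
  have int_\<phi>: "\<phi> (of_int m * t) = of_int m *\<^sub>R \<phi> t" for m t
  proof (cases "m \<ge> 0")
    case True
    then show ?thesis using nat_\<phi>[of "nat m" t] by simp
  next
    case False
    then have "of_int m * t = - (of_nat (nat (- m)) * t)" by simp
    then show ?thesis using nat_\<phi>[of "nat (- m)" t] neg_\<phi> False by simp
  qed
  have "\<phi> q = 0" if "q \<in> \<rat>" for q
  proof -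
    obtain a b where ab: "b > 0" "q = of_int a / of_int b"
      using \<open>q \<in> \<rat>\<close> by (auto elim!: Rats_cases')
    then have "of_int b * q = of_int a * 1" by simp
    then have "of_int b *\<^sub>R \<phi> q = 0"
      using int_\<phi>[of b q] int_\<phi>[of a 1] by (simp add: \<phi>_def)
    then show ?thesis using ab by simp
  qed
  moreover have "continuous_on UNIV \<phi>"
    unfolding \<phi>_def by (intro continuous_intros cont)
  ultimately have "\<phi> t = 0"
    using continuous_constant_on_closure[of "\<rat>" \<phi> 0 t] Rats_closure_real by auto
  then show ?thesis by (simp add: \<phi>_def)
qed

lemma two_powr_one_minus_less_one:
  fixes p :: real
  assumes "1 < p"
  shows "2 powr (1 - p) < 1"
  by (rule powr_less_one) (use assms in auto)

lemma two_pow_mult_inverse_powr: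
  fixes p :: real
  shows "2 ^ n * inverse (2 ^ n) powr p = (2 powr (1 - p)) ^ n"
proof -
  have "(2::real) ^ n * inverse (2 ^ n) powr p = 2 powr (real n - real n * p)"
    by (simp add: powr_realpow[symmetric] inverse_powr powr_powr powr_diff powr_minus divide_inverse)
  also have "\<dots> = (2 powr (1 - p)) powr real n"
    by (simp add: powr_powr algebra_simps)
  finally show ?thesis by (simp add: powr_realpow)
qed

locale approx_additive =
  fixes h :: "'a::real_normed_vector \<Rightarrow> 'b::banach" and K p :: real
  assumes p_gt_1: "1 < p"
    and tendsto_zero: "(h \<longlongrightarrow> 0) (at 0)"
    and approx_add: "\<And>a b. norm (h (a + b) - h a - h b) \<le> K * (norm a + norm b) powr p"
begin

abbreviation ratio :: real where "ratio \<equiv> 2 powr (1 - p)"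

lemma ratio_less_one: "ratio < 1"
  using two_powr_one_minus_less_one[OF p_gt_1] .

definition rescaled :: "nat \<Rightarrow> 'a \<Rightarrow> 'b" where
  "rescaled n v = 2 ^ n *\<^sub>R h (inverse (2 ^ n) *\<^sub>R v)"

lemma rescaled_defect:
  "norm (rescaled n (a + b) - rescaled n a - rescaled n b) \<le> K * (norm a + norm b) powr p * ratio ^ n"
proof -
  define s :: real where "s = inverse (2 ^ n)"
  have "norm (rescaled n (a + b) - rescaled n a - rescaled n b)
      = 2 ^ n * norm (h (s *\<^sub>R a + s *\<^sub>R b) - h (s *\<^sub>R a) - h (s *\<^sub>R b))"
    unfolding rescaled_def s_def scaleR_add_right scaleR_diff_right[symmetric] by simp
  also have "\<dots> \<le> 2 ^ n * (K * (s * (norm a + norm b)) powr p)"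
    using approx_add[of "s *\<^sub>R a" "s *\<^sub>R b"] by (simp add: s_def distrib_left)
  also have "\<dots> = K * (norm a + norm b) powr p * (2 ^ n * s powr p)"
    by (simp add: s_def powr_mult)
  finally show ?thesis
    by (simp add: s_def two_pow_mult_inverse_powr)
qed

lemma rescaled_step: "norm (rescaled (Suc n) v - rescaled n v) \<le> K * norm v powr p * ratio ^ n"
proof -
  define u where "u = (1/2) *\<^sub>R v"
  have "rescaled (Suc n) v = rescaled n u + rescaled n u"
    by (simp add: rescaled_def u_def scaleR_2[symmetric])
  moreover have "u + u = v" and "norm u + norm u = norm v"
    by (simp_all add: u_def scaleR_2[symmetric])
  ultimately have "rescaled (Suc n) v - rescaled n v = - (rescaled n (u + u) - rescaled n u - rescaled n u)"
    by simp
  then show ?thesis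
    using rescaled_defect[of n u u] \<open>norm u + norm u = norm v\<close> by (simp only: norm_minus_cancel)
qed

lemma summable_rescaled_step: "summable (\<lambda>n. rescaled (Suc n) v - rescaled n v)"
  by (rule summable_comparison_test[of _ "\<lambda>n. K * norm v powr p * ratio ^ n"])
    (use rescaled_step ratio_less_one in \<open>auto intro!: summable_mult summable_geometric\<close>)

definition stable :: "'a \<Rightarrow> 'b" where
  "stable v = h v + (\<Sum>n. rescaled (Suc n) v - rescaled n v)"

lemma rescaled_tendsto: "(\<lambda>n. rescaled n v) \<longlonglongrightarrow> stable v"
proof -
  have "rescaled 0 v = h v" by (simp add: rescaled_def)
  then have partial_sums: "(\<lambda>n. h v + (\<Sum>i<n. rescaled (Suc i) v - rescaled i v)) = (\<lambda>n. rescaled n v)"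
    using sum_lessThan_telescope[of "\<lambda>i. rescaled i v"] by simp
  show ?thesis
    using tendsto_add[OF tendsto_const[of "h v"] summable_LIMSEQ[OF summable_rescaled_step[of v]]]
    unfolding partial_sums stable_def .
qed

lemma norm_sub_stable_le: "norm (h v - stable v) \<le> K / (1 - ratio) * norm v powr p"
proof -
  have "norm (h v - stable v) = norm (\<Sum>n. rescaled (Suc n) v - rescaled n v)"
    by (simp add: stable_def)
  also have "\<dots> \<le> (\<Sum>n. K * norm v powr p * ratio ^ n)"
    by (rule norm_suminf_le)
      (use rescaled_step ratio_less_one in \<open>auto intro!: summable_mult summable_geometric\<close>)
  also have "\<dots> = K * norm v powr p / (1 - ratio)"
    using ratio_less_one by (simp add: suminf_mult suminf_geometric summable_geometric divide_inverse)
  finally show ?thesis by simp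
qed

lemma stable_add: "stable (a + b) = stable a + stable b"
proof -
  have "(\<lambda>n. rescaled n (a + b) - rescaled n a - rescaled n b) \<longlonglongrightarrow> stable (a + b) - stable a - stable b"
    by (intro tendsto_diff rescaled_tendsto)
  moreover have "(\<lambda>n. rescaled n (a + b) - rescaled n a - rescaled n b) \<longlonglongrightarrow> 0"
  proof (rule Lim_null_comparison)
    show "\<forall>\<^sub>F n in sequentially. norm (rescaled n (a + b) - rescaled n a - rescaled n b)
        \<le> K * (norm a + norm b) powr p * ratio ^ n"
      by (intro always_eventually allI rescaled_defect)
    show "(\<lambda>n. K * (norm a + norm b) powr p * ratio ^ n) \<longlonglongrightarrow> 0"
      using ratio_less_one by (intro tendsto_mult_right_zero LIMSEQ_realpow_zero) auto
  qed
  ultimately have "stable (a + b) - stable a - stable b = 0"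
    by (rule LIMSEQ_unique)
  then show ?thesis by (simp add: algebra_simps)
qed

lemma stable_tendsto_zero: "(stable \<longlongrightarrow> 0) (at 0)"
proof (rule Lim_null_comparison)
  show "\<forall>\<^sub>F w in at 0. norm (stable w) \<le> norm (h w) + K / (1 - ratio) * norm w powr p"
    using norm_sub_stable_le norm_triangle_sub[of "stable _" "h _"]
    by (intro always_eventually allI) (smt (verit) norm_minus_commute)
  have powr_zero: "((\<lambda>w. norm w powr p) \<longlongrightarrow> 0) (at (0::'a))"
    using p_gt_1 by (intro tendsto_zero_powrI tendsto_norm_zero tendsto_ident_at) auto
  show "((\<lambda>w. norm (h w) + K / (1 - ratio) * norm w powr p) \<longlongrightarrow> 0) (at 0)"
    using tendsto_add[OF tendsto_norm_zero[OF tendsto_zero] tendsto_mult_right_zero[OF powr_zero, of "K / (1 - ratio)"]] by simp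
qed

lemma isCont_stable: "isCont stable x"
proof -
  have "((\<lambda>d. stable (x + d)) \<longlongrightarrow> stable x) (at 0)"
    using tendsto_add[OF tendsto_const stable_tendsto_zero, of "stable x"] by (simp add: stable_add)
  then show ?thesis unfolding isCont_def by (rule LIM_offset_zero_cancel)
qed

lemma linear_stable: "linear stable"
proof (rule linearI)
  show "stable (a + b) = stable a + stable b" for a b by (rule stable_add)
  show "stable (c *\<^sub>R v) = c *\<^sub>R stable v" for c v
  proof -
    have "continuous_on UNIV stable"
      by (simp add: continuous_at_imp_continuous_on isCont_stable)
    then have "continuous_on UNIV (\<lambda>t. stable (t *\<^sub>R v))"
      by (rule continuous_on_compose2) (intro continuous_intros, auto)
    then show ?thesis
      using additive_continuous_imp_scaleR[of "\<lambda>t. stable (t *\<^sub>R v)" c]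
      by (simp add: scaleR_add_left stable_add)
  qed
qed

lemma near_linear: "\<exists>L. linear L \<and> (\<forall>w. norm (h w - L w) \<le> K / (1 - ratio) * norm w powr p)"
  using linear_stable norm_sub_stable_le by blast

end

lemma mixed_difference_bound:
  fixes F :: "'a::euclidean_space \<Rightarrow> real" and G L :: "'a \<Rightarrow> 'a"
  assumes lin: "linear L" and "0 \<le> p" and "0 \<le> c"
    and dF: "\<And>w. (F has_derivative (\<lambda>d. G w \<bullet> d)) (at w)"
    and approx: "\<And>w. norm (G w - G 0 - L w) \<le> c * norm w powr p"
  shows "\<bar>F (y + z) - F y - F z + F 0 - L z \<bullet> y\<bar> \<le> 2 * c * (norm y + norm z) powr p * norm y"
proof -
  define F' where "F' s = (\<lambda>t. G (s *\<^sub>R y + z) \<bullet> (t *\<^sub>R y) - G (s *\<^sub>R y) \<bullet> (t *\<^sub>R y))" for s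
  have "((\<lambda>s. F (s *\<^sub>R y + z) - F (s *\<^sub>R y)) has_derivative F' s) (at s within {0..1})" for s
  proof -
    have shifted: "((\<lambda>s. s *\<^sub>R y + z) has_derivative (\<lambda>t. t *\<^sub>R y)) (at s)"
      by (auto intro!: derivative_eq_intros)
    have "((\<lambda>s. s *\<^sub>R y) has_derivative (\<lambda>t. t *\<^sub>R y)) (at s)"
      by (auto intro!: derivative_eq_intros)
    from has_derivative_diff[OF has_derivative_compose[OF shifted dF] has_derivative_compose[OF this dF]]
    show ?thesis
      unfolding F'_def by (rule has_derivative_at_withinI)
  qed
  then obtain \<theta> where \<theta>: "\<theta> \<in> {0..1}"
    and mvt: "F (1 *\<^sub>R y + z) - F (1 *\<^sub>R y) - (F (0 *\<^sub>R y + z) - F (0 *\<^sub>R y)) = F' \<theta> (1 - 0)"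
    using mvt_very_simple[OF zero_le_one] by blast
  have small: "norm (G w - G 0 - L w) \<le> c * (norm y + norm z) powr p" if "norm w \<le> norm y + norm z" for w
    using approx[of w] powr_mono2[OF \<open>0 \<le> p\<close> _ that] \<open>0 \<le> c\<close>
    by (smt (verit) mult_left_mono norm_ge_zero)
  have "norm (\<theta> *\<^sub>R y) \<le> norm y"
    using \<theta> by (simp add: mult_left_le_one_le)
  then have "norm (\<theta> *\<^sub>R y + z) \<le> norm y + norm z" and "norm (\<theta> *\<^sub>R y) \<le> norm y + norm z"
    using norm_triangle_ineq[of "\<theta> *\<^sub>R y" z] norm_ge_zero[of z] by linarith+
  note E = small[OF this(1)] small[OF this(2)]
  define E1 where "E1 = G (\<theta> *\<^sub>R y + z) - G 0 - L (\<theta> *\<^sub>R y + z)"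
  define E2 where "E2 = G (\<theta> *\<^sub>R y) - G 0 - L (\<theta> *\<^sub>R y)"
  have "G (\<theta> *\<^sub>R y + z) - G (\<theta> *\<^sub>R y) = L z + (E1 - E2)"
    unfolding E1_def E2_def using linear_add[OF lin, of "\<theta> *\<^sub>R y" z] by (simp add: algebra_simps)
  then have "F (y + z) - F y - F z + F 0 - L z \<bullet> y = (E1 - E2) \<bullet> y"
    using mvt by (simp add: F'_def inner_diff_left[symmetric] inner_add_left)
  then have "\<bar>F (y + z) - F y - F z + F 0 - L z \<bullet> y\<bar> \<le> (norm E1 + norm E2) * norm y"
    using Cauchy_Schwarz_ineq2[of "E1 - E2" y] norm_triangle_ineq4[of E1 E2]
    by (smt (verit) mult_right_mono norm_ge_zero)
  also have "\<dots> \<le> 2 * c * (norm y + norm z) powr p * norm y"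
    using E unfolding E1_def E2_def by (intro mult_right_mono) auto
  finally show ?thesis .
qed

text \<open>The mixed difference \<open>F (y + z) - F y - F z + F 0\<close> is symmetric in \<open>y, z\<close>; after rescaling
  \<open>y, z\<close> by \<open>t\<close> it equals both \<open>t\<^sup>2 L w \<bullet> u\<close> and \<open>t\<^sup>2 L u \<bullet> w\<close> up to \<open>O(t\<^sup>p\<^sup>+\<^sup>1)\<close>, and \<open>p + 1 > 2\<close>.\<close>

lemma linear_approx_of_gradient_symmetric:
  fixes F :: "'a::euclidean_space \<Rightarrow> real" and G L :: "'a \<Rightarrow> 'a"
  assumes lin: "linear L" and p: "1 < p" and c: "0 \<le> c"
    and dF: "\<And>w. (F has_derivative (\<lambda>d. G w \<bullet> d)) (at w)"
    and approx: "\<And>w. norm (G w - G 0 - L w) \<le> c * norm w powr p"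
  shows "L u \<bullet> w = L w \<bullet> u"
proof -
  define S where "S = norm u + norm w"
  have bound: "\<bar>L w \<bullet> u - L u \<bullet> w\<bar> \<le> 2 * c * S powr p * S * t powr (p - 1)" if "t > 0" for t
  proof -
    note mixed = mixed_difference_bound[OF lin _ c dF approx]
    define X where "X = F (t *\<^sub>R u + t *\<^sub>R w) - F (t *\<^sub>R u) - F (t *\<^sub>R w) + F 0"
    have "norm (t *\<^sub>R u) + norm (t *\<^sub>R w) = t * S"
      using that by (simp add: S_def algebra_simps)
    then have "\<bar>X - t\<^sup>2 * (L w \<bullet> u)\<bar> \<le> 2 * c * (t * S) powr p * (t * norm u)"
      and "\<bar>X - t\<^sup>2 * (L u \<bullet> w)\<bar> \<le> 2 * c * (t * S) powr p * (t * norm w)"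
      using mixed[of "t *\<^sub>R u" "t *\<^sub>R w"] mixed[of "t *\<^sub>R w" "t *\<^sub>R u"] p that
      by (simp_all add: X_def linear_scale[OF lin] power2_eq_square add.commute)
    then have "\<bar>t\<^sup>2 * (L w \<bullet> u) - t\<^sup>2 * (L u \<bullet> w)\<bar>
        \<le> 2 * c * (t * S) powr p * (t * norm u) + 2 * c * (t * S) powr p * (t * norm w)"
      by linarith
    also have "\<dots> = 2 * c * (t * S) powr p * (t * S)"
      by (simp add: S_def distrib_left)
    also have "\<dots> = (2 * c * S powr p * S * t powr (p - 1)) * t\<^sup>2"
      using that by (simp add: S_def powr_mult powr_diff power2_eq_square)
    finally show ?thesis
      using that by (simp add: abs_mult right_diff_distrib[symmetric])
  qed
  have "\<bar>L w \<bullet> u - L u \<bullet> w\<bar> \<le> 0"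
  proof (rule tendsto_le[of "at_right 0"])
    show "((\<lambda>t. 2 * c * S powr p * S * t powr (p - 1)) \<longlongrightarrow> 0) (at_right 0)"
      using p by (intro tendsto_mult_right_zero tendsto_zero_powrI tendsto_ident_at)
        (auto simp: eventually_at_filter)
    show "\<forall>\<^sub>F t in at_right 0. \<bar>L w \<bullet> u - L u \<bullet> w\<bar> \<le> 2 * c * S powr p * S * t powr (p - 1)"
      using bound eventually_at_right_less[of 0] by (auto elim!: eventually_mono)
  qed auto
  then show ?thesis by simp
qed

lemma transpose_matrix_eq_if_symmetric:
  fixes L :: "real^'n \<Rightarrow> real^'n"
  assumes "\<And>u v. L u \<bullet> v = L v \<bullet> u"
  shows "transpose (matrix L) = matrix L"
  unfolding transpose_def matrix_def vec_eq_iff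
  using assms[of "axis _ 1" "axis _ 1"] by (simp add: inner_axis)

lemma gradient_symmetric_linear_approx:
  fixes f :: "'a::euclidean_space \<Rightarrow> real" and g :: "'a \<Rightarrow> 'a"
  assumes p: "1 < p" and K: "0 \<le> K"
    and df: "\<And>x. (f has_derivative (\<lambda>h. g x \<bullet> h)) (at x)"
    and cont: "isCont g x'"
    and osc: "\<And>l y x. 0 < l \<Longrightarrow> norm y \<le> l \<Longrightarrow> x \<in> ball x' l \<Longrightarrow>
                norm (delta y g x - delta y g x') \<le> K * l powr p"
  shows "\<exists>L. linear L \<and> (\<forall>u v. L u \<bullet> v = L v \<bullet> u) \<and>
           (\<forall>w. norm (g (x' + w) - g x' - L w) \<le> K / (1 - 2 powr (1 - p)) * norm w powr p)"
proof -
  define h where "h w = g (x' + w) - g x'" for w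
  have "approx_additive h K p"
  proof
    show "(h \<longlongrightarrow> 0) (at 0)"
      unfolding h_def[abs_def] using cont by (simp add: isCont_iff LIM_zero_iff)
    show "norm (h (a + b) - h a - h b) \<le> K * (norm a + norm b) powr p" for a b
    proof (cases "b = 0")
      case True
      then show ?thesis using K by (simp add: h_def)
    next
      case False
      have "delta b g (x' + a) - delta b g x' = h (a + b) - h a - h b"
        by (simp add: delta_def h_def algebra_simps)
      then show ?thesis
        using osc[of "norm a + norm b" b "x' + a"] False by (simp add: dist_norm add_nonneg_pos)
    qed
  qed (use p in auto)
  then obtain L where L: "linear L"
    and near: "\<And>w. norm (h w - L w) \<le> K / (1 - 2 powr (1 - p)) * norm w powr p"
    using approx_additive.near_linear by blast
  have "0 \<le> K / (1 - 2 powr (1 - p))"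
    using K two_powr_one_minus_less_one[OF p] by simp
  moreover have "((\<lambda>w. f (x' + w)) has_derivative (\<lambda>d. g (x' + w) \<bullet> d)) (at w)" for w
  proof -
    have "((\<lambda>w. x' + w) has_derivative (\<lambda>d. d)) (at w)"
      by (auto intro!: derivative_eq_intros)
    from has_derivative_compose[OF this df] show ?thesis .
  qed
  ultimately have "L u \<bullet> v = L v \<bullet> u" for u v
    by (rule linear_approx_of_gradient_symmetric[OF L p]) (use near in \<open>simp add: h_def\<close>)
  then show ?thesis using L near by (auto simp: h_def)
qed

lemma holder_continuous_imp_isCont:
  fixes g :: "'a::real_normed_vector \<Rightarrow> 'b::real_normed_vector"
  assumes "0 < \<alpha>" and "holder_continuous \<alpha> g"
  shows "isCont g x"
proof -
  obtain M where M: "\<And>x y. norm (g x - g y) \<le> M * norm (x - y) powr \<alpha>"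
    using assms(2) unfolding holder_continuous_def by blast
  have "((\<lambda>y. norm (y - x)) \<longlongrightarrow> 0) (at x)"
    by (rule tendsto_norm_zero[OF LIM_zero[OF tendsto_ident_at]])
  then have "((\<lambda>y. norm (y - x) powr \<alpha>) \<longlongrightarrow> 0) (at x)"
    by (rule tendsto_zero_powrI[OF _ tendsto_const _ assms(1)]) simp_all
  then have "((\<lambda>y. M * norm (y - x) powr \<alpha>) \<longlongrightarrow> 0) (at x)"
    by (rule tendsto_mult_right_zero)
  then have "((\<lambda>y. g y - g x) \<longlongrightarrow> 0) (at x)"
    by (rule Lim_null_comparison[OF always_eventually, rotated]) (use M in blast)
  then show ?thesis
    unfolding isCont_def by (rule LIM_zero_cancel)
qed

lemma supnorm_ball_le_iff:
  assumes "0 \<le> c"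
  shows "supnorm_ball u x0 r \<le> ennreal c \<longleftrightarrow> (\<forall>z\<in>ball x0 r. norm (u z) \<le> c)"
  using assms by (simp add: supnorm_ball_def SUP_le_iff)

lemma oscillation_le_if_INF_supnorm_ball_le:
  fixes u :: "'a::metric_space \<Rightarrow> 'b::real_normed_vector"
  assumes "0 < r" and "0 \<le> c"
    and "(INF k. supnorm_ball (\<lambda>x. u x - k) x0 r) \<le> ennreal c"
    and "z \<in> ball x0 r"
  shows "norm (u z - u x0) \<le> 2 * c"
proof (rule field_le_epsilon)
  fix e :: real
  assume "0 < e"
  with assms(2,3) have "(INF k. supnorm_ball (\<lambda>x. u x - k) x0 r) < ennreal (c + e / 2)"
    by (simp add: le_less_trans ennreal_lessI)
  then obtain k where "supnorm_ball (\<lambda>x. u x - k) x0 r < ennreal (c + e / 2)"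
    by (auto simp: INF_less_iff)
  moreover have "0 \<le> c + e / 2"
    using assms(2) \<open>0 < e\<close> by simp
  ultimately have "\<forall>x\<in>ball x0 r. norm (u x - k) \<le> c + e / 2"
    by (metis supnorm_ball_le_iff less_imp_le)
  then have "norm (u z - k) \<le> c + e / 2" and "norm (u x0 - k) \<le> c + e / 2"
    using assms(1,4) by auto
  moreover have "norm (u z - u x0) \<le> norm (u z - k) + norm (u x0 - k)"
    using norm_triangle_ineq4[of "u z - k" "u x0 - k"] by simp
  ultimately show "norm (u z - u x0) \<le> 2 * c + e"
    by linarith
qed

lemma le_ennreal_mult_if_inverse_mult_le:
  assumes "0 < w" and "0 \<le> K" and "ennreal (1 / w) * X \<le> ennreal K"
  shows "X \<le> ennreal (K * w)"
proof -
  have "X = ennreal w * (ennreal (1 / w) * X)"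
    using assms(1) by (simp add: mult.assoc[symmetric] ennreal_mult[symmetric])
  also have "\<dots> \<le> ennreal w * ennreal K"
    using assms(3) by (rule mult_left_mono) simp
  finally show ?thesis
    using assms by (simp add: ennreal_mult[symmetric] mult.commute)
qed

lemma delta_oscillation_le:
  fixes g :: "'a::real_normed_vector \<Rightarrow> 'b::real_normed_vector"
  assumes R: "(SUP l\<in>{0<..}. ennreal (1 / l powr q) *
               (SUP y\<in>{y. norm y \<le> l}. INF k. supnorm_ball (\<lambda>x. delta y g x - k) x0 l)) = ennreal K"
    and "0 \<le> K" and "0 < l" and "norm y \<le> l" and "x \<in> ball x0 l"
  shows "norm (delta y g x - delta y g x0) \<le> 2 * K * l powr q"
proof -
  have "ennreal (1 / l powr q) * (INF k. supnorm_ball (\<lambda>x. delta y g x - k) x0 l) \<le> ennreal K"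
    unfolding R[symmetric] using assms(3,4)
    by (intro SUP_upper2[of l] mult_left_mono SUP_upper) auto
  then have "(INF k. supnorm_ball (\<lambda>x. delta y g x - k) x0 l) \<le> ennreal (K * l powr q)"
    using assms(2,3) by (intro le_ennreal_mult_if_inverse_mult_le) auto
  moreover have "0 \<le> K * l powr q"
    using assms(2) by simp
  ultimately show ?thesis
    using oscillation_le_if_INF_supnorm_ball_le[OF \<open>0 < l\<close> _ _ \<open>x \<in> ball x0 l\<close>]
    by (simp add: mult.assoc)
qed

lemma SUP_scaled_best_affine_le:
  fixes g :: "real^'n \<Rightarrow> real^'n" and B :: "real^'n^'n"
  assumes "transpose B = B" and "0 \<le> c" and "0 \<le> q"
    and approx: "\<And>w. norm (g (x0 + w) - g x0 - B *v w) \<le> c * norm w powr q"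
  shows "(SUP r\<in>{0<..}. ennreal (1 / r powr q) *
           (INF B\<in>{B :: real^'n^'n. transpose B = B}. INF b.
              supnorm_ball (\<lambda>x. g x - (B *v (x - x0) + b)) x0 r)) \<le> ennreal c"
    (is "(SUP r\<in>{0<..}. ennreal (1 / r powr q) * ?best r) \<le> _")
proof (rule SUP_least)
  fix r :: real
  assume "r \<in> {0<..}"
  have "?best r \<le> supnorm_ball (\<lambda>x. g x - (B *v (x - x0) + g x0)) x0 r"
    using assms(1) by (intro INF_lower2[of B] INF_lower) auto
  also have "\<dots> \<le> ennreal (c * r powr q)"
  proof (rule supnorm_ball_le_iff[THEN iffD2, rotated], intro ballI)
    fix z
    assume "z \<in> ball x0 r"
    have "norm (g z - (B *v (z - x0) + g x0)) = norm (g (x0 + (z - x0)) - g x0 - B *v (z - x0))"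
      by (simp add: algebra_simps)
    also have "\<dots> \<le> c * norm (z - x0) powr q" by (rule approx)
    also have "\<dots> \<le> c * r powr q"
      using \<open>z \<in> ball x0 r\<close> assms(2,3)
      by (intro mult_left_mono powr_mono2) (auto simp: dist_norm norm_minus_commute)
    finally show "norm (g z - (B *v (z - x0) + g x0)) \<le> c * r powr q" .
  qed (use assms(2) in simp)
  finally have "ennreal (1 / r powr q) * ?best r \<le> ennreal (1 / r powr q) * ennreal (c * r powr q)"
    by (rule mult_left_mono) simp
  also have "\<dots> = ennreal c"
    using \<open>r \<in> {0<..}\<close> assms(2) by (simp add: ennreal_mult[symmetric])
  finally show "ennreal (1 / r powr q) * ?best r \<le> ennreal c" .
qed

lemma best_affine_approx_le_delta_oscillation:
  fixes f :: "real^'n \<Rightarrow> real" and g :: "real^'n \<Rightarrow> real^'n"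
  assumes q: "1 < q"
    and df: "\<And>x. (f has_derivative (\<lambda>h. g x \<bullet> h)) (at x)"
    and cont: "isCont g x0"
  shows "(SUP r\<in>{0<..}. ennreal (1 / r powr q) *
           (INF B\<in>{B :: real^'n^'n. transpose B = B}. INF b.
              supnorm_ball (\<lambda>x. g x - (B *v (x - x0) + b)) x0 r))
         \<le> ennreal (2 / (1 - 2 powr (1 - q))) *
           (SUP l\<in>{0<..}. ennreal (1 / l powr q) *
             (SUP y\<in>{y. norm y \<le> l}. INF k. supnorm_ball (\<lambda>x. delta y g x - k) x0 l))"
    (is "?L \<le> ennreal ?C * ?R")
proof (cases ?R)
  case (real K)
  then have R: "?R = ennreal K" and "0 \<le> K" by simp_all
  have osc: "norm (delta y g x - delta y g x0) \<le> (2 * K) * l powr q"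
    if "0 < l" and "norm y \<le> l" and "x \<in> ball x0 l" for l y x
    using delta_oscillation_le[OF R \<open>0 \<le> K\<close> that] by simp
  have "0 \<le> 2 * K" and "0 \<le> q" and "0 \<le> ?C" and "0 \<le> ?C * K"
    using \<open>0 \<le> K\<close> q two_powr_one_minus_less_one[OF q] by simp_all
  from gradient_symmetric_linear_approx[OF q \<open>0 \<le> 2 * K\<close> df cont osc]
  obtain L where L: "linear L" "\<And>u v. L u \<bullet> v = L v \<bullet> u"
    and near: "\<And>w. norm (g (x0 + w) - g x0 - L w) \<le> 2 * K / (1 - 2 powr (1 - q)) * norm w powr q"
    by blast
  have "matrix L *v w = L w" for w
    using matrix_vector_mul(2)[OF L(1)] by metis
  then have "norm (g (x0 + w) - g x0 - matrix L *v w) \<le> ?C * K * norm w powr q" for w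
    using near[of w] by simp
  then have "?L \<le> ennreal (?C * K)"
    by (rule SUP_scaled_best_affine_le[OF transpose_matrix_eq_if_symmetric[OF L(2)]
          \<open>0 \<le> ?C * K\<close> \<open>0 \<le> q\<close>])
  also have "\<dots> = ennreal ?C * ?R"
    unfolding R by (rule ennreal_mult'[OF \<open>0 \<le> ?C\<close>])
  finally show ?thesis .
next
  case top
  have "0 < ?C"
    using two_powr_one_minus_less_one[OF q] by simp
  then have "ennreal ?C \<noteq> 0"
    by (simp only: ennreal_eq_0_iff not_le)
  then have "ennreal ?C * ?R = top"
    unfolding top ennreal_mult_top by (simp only: if_False)
  then show ?thesis
    by (simp only: top_greatest)
qed

theorem proposition1:
  fixes \<alpha> :: real
  assumes "1/2 < \<alpha>" and "\<alpha> < 1"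
  shows "\<exists>C>0. \<forall>(f :: real^'n \<Rightarrow> real) (g :: real^'n \<Rightarrow> real^'n) (x' :: real^'n).
           (\<forall>x. (f has_derivative (\<lambda>h. g x \<bullet> h)) (at x)) \<and> holder_continuous \<alpha> g \<longrightarrow>
           (SUP r\<in>{0<..}. ennreal (1 / r powr (2*\<alpha>)) *
              (INF B\<in>{B :: real^'n^'n. transpose B = B}. INF b :: real^'n.
                 supnorm_ball (\<lambda>x. g x - (B *v (x - x') + b)) x' r))
           \<le> ennreal C *
             (SUP l\<in>{0<..}. ennreal (1 / l powr (2*\<alpha>)) *
              (SUP y\<in>{y :: real^'n. norm y \<le> l}. INF k :: real^'n.
                 supnorm_ball (\<lambda>x. delta y g x - k) x' l))"
proof -
  have "1 < 2 * \<alpha>" and "0 < \<alpha>"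
    using assms by auto
  then show ?thesis
    using two_powr_one_minus_less_one[of "2 * \<alpha>"]
    by (intro exI[of _ "2 / (1 - 2 powr (1 - 2 * \<alpha>))"] conjI allI impI
        best_affine_approx_le_delta_oscillation)
      (auto intro: holder_continuous_imp_isCont[OF \<open>0 < \<alpha>\<close>])
qed

end
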